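(* Let $X$ be a Fréchet space and let $\Gamma:[0,1]\to cb(X)$ be a multifunction. Then the following are equivalent: (i) $\Gamma$ is Bochner measurable; (ii) $\Gamma$ is totally measurable; (iii) $\Gamma$ is measurable by seminorm.
   Context: $X$ is a Fréchet space (metrizable, complete, locally convex) whose topology is generated by an increasing sufficient sequence of seminorms $(p_i)_{i\in\mathbb N}$, with the translation-invariant metric $d(x,y)=\sum_{i\ge1}2^{-i}\frac{p_i(x-y)}{1+p_i(x-y)}$. $cb(X)$ denotes the family of nonempty closed bounded convex subsets of $X$. For $A,B\in cb(X)$: $H(A,B)=\max(e_d(A,B),e_d(B,A))$ with $e_d(A,B)=\sup_{a\in A}\inf_{b\in B}d(a,b)$ (Hausdorff metric), and for each $i$, $H_i(A,B)=\max(e_i(A,B),e_i(B,A))$ with $e_i(A,B)=\sup_{a\in A}\inf_{b\in B}p_i(a-b)$. $[0,1]$ carries Lebesgue measure $\mu$ and the $\sigma$-algebra $\mathcal L$ of Lebesgue measurable sets. A simple multifunction is $\Gamma=\sum_{j=1}^p\chi_{A_j}C_j$ with $A_j\in\mathcal L$ pairwise disjoint and $C_j\in cb(X)$. $\Gamma$ is Bochner measurable if there are simple multifunctions $\Gamma_n:[0,1]\to cb(X)$ with $H(\Gamma_n(t),\Gamma(t))\to0$ for a.e. $t$; totally measurable if there are simple multifunctions $\Gamma_n:[0,1]\to cb(X)$ such that for every $i$, $H_i(\Gamma_n(t),\Gamma(t))\to0$ for a.e. $t$; measurable by seminorm if for every $i$ there are simple multifunctions $\Gamma_n^i:[0,1]\to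 cb(X)$ with $H_i(\Gamma^i_n(t),\Gamma(t))\to0$ for a.e. $t$. *)

theory Defs
  imports "HOL-Analysis.Analysis"
begin

text \<open>Seminorms are indexed from 0 (p 0, p 1, ...), so the paper's p_i is our p (i-1).\<close>

definition is_seminorm :: "('a::real_vector \<Rightarrow> real) \<Rightarrow> bool" where
  "is_seminorm q \<longleftrightarrow> (\<forall>x y. q (x + y) \<le> q x + q y) \<and> (\<forall>c x. q (c *\<^sub>R x) = \<bar>c\<bar> * q x)"

definition fdist :: "(nat \<Rightarrow> 'a::real_vector \<Rightarrow> real) \<Rightarrow> 'a \<Rightarrow> 'a \<Rightarrow> real" where
  "fdist p x y = (\<Sum>i. (1/2) ^ Suc i * (p i (x - y) / (1 + p i (x - y))))"

definition frechet_seminorms :: "(nat \<Rightarrow> 'a::real_vector \<Rightarrow> real) \<Rightarrow> bool" where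
  "frechet_seminorms p \<longleftrightarrow>
     (\<forall>i. is_seminorm (p i)) \<and>
     (\<forall>i x. p i x \<le> p (Suc i) x) \<and>
     (\<forall>x. (\<forall>i. p i x = 0) \<longrightarrow> x = 0) \<and>
     (\<forall>s. (\<forall>e>0. \<exists>N. \<forall>m\<ge>N. \<forall>n\<ge>N. fdist p (s m) (s n) < e)
           \<longrightarrow> (\<exists>x. (\<lambda>n. fdist p (s n) x) \<longlonglongrightarrow> 0))"

definition cb :: "(nat \<Rightarrow> 'a::real_vector \<Rightarrow> real) \<Rightarrow> 'a set set" where
  "cb p = {A. A \<noteq> {} \<and> convex A \<and>
     (\<forall>i. \<exists>M. \<forall>a\<in>A. p i a \<le> M) \<and>
     (\<forall>s x. (\<forall>n. s n \<in> A) \<and> (\<lambda>n. fdist p (s n) x) \<longlonglongrightarrow> 0 \<longrightarrow> x \<in> A)}"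

definition excess :: "('a \<Rightarrow> 'a \<Rightarrow> real) \<Rightarrow> 'a set \<Rightarrow> 'a set \<Rightarrow> real" where
  "excess f A B = (SUP a\<in>A. INF b\<in>B. f a b)"

definition hausdorff :: "('a \<Rightarrow> 'a \<Rightarrow> real) \<Rightarrow> 'a set \<Rightarrow> 'a set \<Rightarrow> real" where
  "hausdorff f A B = max (excess f A B) (excess f B A)"

abbreviation H :: "(nat \<Rightarrow> 'a::real_vector \<Rightarrow> real) \<Rightarrow> 'a set \<Rightarrow> 'a set \<Rightarrow> real" where
  "H p \<equiv> hausdorff (fdist p)"

abbreviation Hi :: "(nat \<Rightarrow> 'a::real_vector \<Rightarrow> real) \<Rightarrow> nat \<Rightarrow> 'a set \<Rightarrow> 'a set \<Rightarrow> real" where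
  "Hi p i \<equiv> hausdorff (\<lambda>a b. p i (a - b))"

text \<open>Simple multifunction on [0,1]: sum of chi_{A_j} C_j, A_j pairwise disjoint Lebesgue
  measurable; outside the union of the A_j the value is {0} (= 0 * C_j).\<close>
definition simple_mf :: "(nat \<Rightarrow> 'a::real_vector \<Rightarrow> real) \<Rightarrow> (real \<Rightarrow> 'a set) \<Rightarrow> bool" where
  "simple_mf p G \<longleftrightarrow> (\<exists>(n::nat) (A::nat \<Rightarrow> real set) C.
     (\<forall>j<n. A j \<in> sets lebesgue \<and> A j \<subseteq> {0..1} \<and> C j \<in> cb p) \<and>
     disjoint_family_on A {..<n} \<and>
     (\<forall>t\<in>{0..1}. (\<forall>j<n. t \<in> A j \<longrightarrow> G t = C j) \<and>
                   (t \<notin> (\<Union>j<n. A j) \<longrightarrow> G t = {0})))"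

definition bochner_measurable_mf :: "(nat \<Rightarrow> 'a::real_vector \<Rightarrow> real) \<Rightarrow> (real \<Rightarrow> 'a set) \<Rightarrow> bool" where
  "bochner_measurable_mf p \<Gamma> \<longleftrightarrow> (\<exists>G. (\<forall>n. simple_mf p (G n)) \<and>
     (AE t in lebesgue_on {0..1}. (\<lambda>n. H p (G n t) (\<Gamma> t)) \<longlonglongrightarrow> 0))"

definition totally_measurable_mf :: "(nat \<Rightarrow> 'a::real_vector \<Rightarrow> real) \<Rightarrow> (real \<Rightarrow> 'a set) \<Rightarrow> bool" where
  "totally_measurable_mf p \<Gamma> \<longleftrightarrow> (\<exists>G. (\<forall>n. simple_mf p (G n)) \<and>
     (\<forall>i. AE t in lebesgue_on {0..1}. (\<lambda>n. Hi p i (G n t) (\<Gamma> t)) \<longlonglongrightarrow> 0))"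

definition measurable_by_seminorm_mf :: "(nat \<Rightarrow> 'a::real_vector \<Rightarrow> real) \<Rightarrow> (real \<Rightarrow> 'a set) \<Rightarrow> bool" where
  "measurable_by_seminorm_mf p \<Gamma> \<longleftrightarrow> (\<forall>i. \<exists>G. (\<forall>n. simple_mf p (G n)) \<and>
     (AE t in lebesgue_on {0..1}. (\<lambda>n. Hi p i (G n t) (\<Gamma> t)) \<longlonglongrightarrow> 0))"

end

theory Submission
  imports Defs
begin

text \<open>The Frechet distance \<open>d(x, y)\<close> dominates its \<open>i\<close>-th term \<open>2\<^sup>-\<^sup>i\<^sup>-\<^sup>1 u / (1 + u)\<close>,
  \<open>u = p\<^sub>i(x - y)\<close>, so a small \<open>d(x, y)\<close> forces a small \<open>p\<^sub>i(x - y)\<close>; conversely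
  \<open>d(x, y) \<le> p\<^sub>N(x - y) + 2\<^sup>-\<^sup>N\<close> because the seminorms increase. Passing to excesses, \<open>H(A\<^sub>n, B) \<rightarrow> 0\<close>
  iff \<open>H\<^sub>i(A\<^sub>n, B) \<rightarrow> 0\<close> for every \<open>i\<close>, which is the equivalence of Bochner and total measurability.

  If \<open>\<Gamma>\<close> is measurable by seminorm, take for each \<open>k\<close> simple multifunctions \<open>S(k, m)\<close> converging to
  \<open>\<Gamma>\<close> in \<open>H\<^sub>k\<close>, and pick \<open>n(k)\<close> such that the set where \<open>S(k, m)\<close>, \<open>m \<ge> n(k)\<close>, fails to be
  \<open>1/(k+1)\<close>-Cauchy in \<open>H\<^sub>k\<close> has measure below \<open>2\<^sup>-\<^sup>k\<close>. By Borel-Cantelli, almost everywhere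
  \<open>H\<^sub>k(S(k, n(k)), \<Gamma>) \<le> 1/(k+1)\<close> for all large \<open>k\<close>, and as \<open>H\<^sub>i \<le> H\<^sub>k\<close> for \<open>i \<le> k\<close>, the diagonal
  sequence \<open>S(k, n(k))\<close> converges to \<open>\<Gamma>\<close> in every \<open>H\<^sub>i\<close>. The Cauchy sets are used because only
  distances between simple multifunctions are known to be measurable.\<close>

lemma seminorm_zero: "is_seminorm q \<Longrightarrow> q 0 = 0"
  unfolding is_seminorm_def by (metis abs_zero mult_zero_left scale_zero_left)

lemma seminorm_minus: "is_seminorm q \<Longrightarrow> q (- x) = q x"
  unfolding is_seminorm_def by (metis abs_minus_cancel abs_one mult_1 scaleR_minus1_left)

lemma seminorm_diff_triangle:
  assumes "is_seminorm q" shows "q (a - c) \<le> q (a - b) + q (b - c)"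
proof -
  have "q ((a - b) + (b - c)) \<le> q (a - b) + q (b - c)" using assms unfolding is_seminorm_def by blast
  then show ?thesis by simp
qed

lemma seminorm_nonneg:
  assumes "is_seminorm q" shows "0 \<le> q x"
proof -
  have "q (x - x) \<le> q (x - 0) + q (0 - x)" by (rule seminorm_diff_triangle[OF assms])
  then show ?thesis using seminorm_zero[OF assms] seminorm_minus[OF assms, of x] by simp
qed

lemma frechet_seminorms_seminorm: "frechet_seminorms p \<Longrightarrow> is_seminorm (p i)"
  unfolding frechet_seminorms_def by blast

lemma frechet_seminorms_mono: "frechet_seminorms p \<Longrightarrow> i \<le> j \<Longrightarrow> p i x \<le> p j x"
  unfolding frechet_seminorms_def by (rule lift_Suc_mono_le[of "\<lambda>i. p i x"]) auto

lemma frechet_seminorms_nonneg: "frechet_seminorms p \<Longrightarrow> 0 \<le> p i x"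
  by (rule seminorm_nonneg[OF frechet_seminorms_seminorm])

subsection \<open>Excess and Hausdorff distance of a nonnegative cost\<close>

lemma excess_le:
  assumes "A \<noteq> {}" "\<And>a b. 0 \<le> f a b" "\<And>a. a \<in> A \<Longrightarrow> \<exists>b\<in>B. f a b \<le> c"
  shows "excess f A B \<le> (c::real)"
  unfolding excess_def
proof (rule cSUP_least[OF assms(1)])
  fix a assume "a \<in> A"
  then obtain b where "b \<in> B" "f a b \<le> c" using assms(3) by blast
  moreover have "bdd_below (f a ` B)" using assms(2) by (meson bdd_belowI2)
  ultimately show "(INF b\<in>B. f a b) \<le> c" by (meson cINF_lower2)
qed

lemma INF_le_excess:
  assumes "a \<in> A" "B \<noteq> {}" "\<And>a b. 0 \<le> f a b" "\<And>a b. a \<in> A \<Longrightarrow> b \<in> B \<Longrightarrow> f a b \<le> (M::real)"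
  shows "(INF b\<in>B. f a b) \<le> excess f A B"
  unfolding excess_def
proof (rule cSUP_upper[OF assms(1)])
  obtain b0 where "b0 \<in> B" using assms(2) by blast
  have "(INF b\<in>B. f x b) \<le> M" if "x \<in> A" for x
  proof -
    have "bdd_below (f x ` B)" using assms(3) by (meson bdd_belowI2)
    then show ?thesis using \<open>b0 \<in> B\<close> assms(4)[OF that \<open>b0 \<in> B\<close>] by (meson cINF_lower2)
  qed
  then show "bdd_above ((\<lambda>a. INF b\<in>B. f a b) ` A)" by (meson bdd_aboveI2)
qed

lemma excess_nonneg:
  assumes "A \<noteq> {}" "B \<noteq> {}" "\<And>a b. 0 \<le> f a b" "\<And>a b. a \<in> A \<Longrightarrow> b \<in> B \<Longrightarrow> f a b \<le> (M::real)"
  shows "0 \<le> excess f A B"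
proof -
  obtain a where "a \<in> A" using assms(1) by blast
  have "0 \<le> (INF b\<in>B. f a b)" using assms(2,3) by (intro cINF_greatest) auto
  also have "\<dots> \<le> excess f A B" by (rule INF_le_excess[OF \<open>a \<in> A\<close> assms(2-4)])
  finally show ?thesis .
qed

lemma excess_triangle:
  assumes ne: "A \<noteq> {}" "B \<noteq> {}" "C \<noteq> {}"
    and nonneg: "\<And>a b. 0 \<le> f a b" and tri: "\<And>a b c. f a c \<le> f a b + f b c"
    and bdd: "\<And>a b. a \<in> A \<union> B \<union> C \<Longrightarrow> b \<in> A \<union> B \<union> C \<Longrightarrow> f a b \<le> (M::real)"
  shows "excess f A C \<le> excess f A B + excess f B C"
  unfolding excess_def[of f A C]
proof (rule cSUP_least[OF ne(1)])
  fix a assume a: "a \<in> A"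
  have "(INF c\<in>C. f a c) - excess f B C \<le> f a b" if b: "b \<in> B" for b
  proof -
    have "(INF c\<in>C. f a c) - f a b \<le> (INF c\<in>C. f b c)"
    proof (rule cINF_greatest[OF ne(3)])
      fix c assume "c \<in> C"
      moreover have "bdd_below (f a ` C)" using nonneg by (meson bdd_belowI2)
      ultimately have "(INF c\<in>C. f a c) \<le> f a c" by (meson cINF_lower)
      then show "(INF c\<in>C. f a c) - f a b \<le> f b c" using tri[of a c b] by linarith
    qed
    also have "\<dots> \<le> excess f B C" by (rule INF_le_excess[OF b ne(3) nonneg bdd]) auto
    finally show ?thesis by linarith
  qed
  then have "(INF c\<in>C. f a c) - excess f B C \<le> (INF b\<in>B. f a b)"
    by (intro cINF_greatest[OF ne(2)])
  also have "\<dots> \<le> excess f A B" by (rule INF_le_excess[OF a ne(2) nonneg bdd]) auto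
  finally show "(INF c\<in>C. f a c) \<le> excess f A B + excess f B C" by linarith
qed

lemma excess_mono:
  assumes "A \<noteq> {}" "B \<noteq> {}" "\<And>a b. 0 \<le> f a b" "\<And>a b. f a b \<le> g a b"
    and "\<And>a b. a \<in> A \<Longrightarrow> b \<in> B \<Longrightarrow> g a b \<le> (M::real)"
  shows "excess f A B \<le> excess g A B"
  unfolding excess_def[of f A B]
proof (rule cSUP_least[OF assms(1)])
  fix a assume a: "a \<in> A"
  have "(INF b\<in>B. f a b) \<le> (INF b\<in>B. g a b)"
  proof (rule cINF_greatest[OF assms(2)])
    fix b assume "b \<in> B"
    moreover have "bdd_below (f a ` B)" using assms(3) by (meson bdd_belowI2)
    ultimately show "(INF b\<in>B. f a b) \<le> g a b" using assms(4) by (meson cINF_lower2)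
  qed
  also have "\<dots> \<le> excess g A B"
    using INF_le_excess[OF a assms(2) _ assms(5)] assms(3,4) by (meson order_trans)
  finally show "(INF b\<in>B. f a b) \<le> excess g A B" .
qed

lemma excess_le_of_excess_less:
  assumes "A \<noteq> {}" "B \<noteq> {}" "\<And>a b. 0 \<le> f a b" "\<And>a b. 0 \<le> g a b"
    and "\<And>a b. a \<in> A \<Longrightarrow> b \<in> B \<Longrightarrow> f a b \<le> (M::real)"
    and "excess f A B < e" and "\<And>a b. f a b < e \<Longrightarrow> g a b \<le> e'"
  shows "excess g A B \<le> e'"
proof (rule excess_le[OF assms(1,4)])
  fix a assume "a \<in> A"
  have "(INF b\<in>B. f a b) \<le> excess f A B"
    by (rule INF_le_excess[of a A B f M]) (use assms \<open>a \<in> A\<close> in auto)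
  then have "(INF b\<in>B. f a b) < e" using assms(6) by linarith
  moreover have "bdd_below (f a ` B)" using assms(3) by (meson bdd_belowI2)
  ultimately obtain b where "b \<in> B" "f a b < e" using cINF_less_iff[OF assms(2)] by blast
  then show "\<exists>b\<in>B. g a b \<le> e'" using assms(7) by blast
qed

lemma hausdorff_le_of_hausdorff_less:
  assumes "A \<noteq> {}" "B \<noteq> {}" "\<And>a b. 0 \<le> f a b" "\<And>a b. 0 \<le> g a b"
    and "\<And>a b. a \<in> A \<union> B \<Longrightarrow> b \<in> A \<union> B \<Longrightarrow> f a b \<le> (M::real)"
    and "hausdorff f A B < e" and "\<And>a b. f a b < e \<Longrightarrow> g a b \<le> e'"
  shows "hausdorff g A B \<le> e'"
  using excess_le_of_excess_less[of A B f g M e e'] excess_le_of_excess_less[of B A f g M e e'] assms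
  unfolding hausdorff_def by simp

lemma hausdorff_nonneg:
  assumes "A \<noteq> {}" "B \<noteq> {}" "\<And>a b. 0 \<le> f a b" "\<And>a b. a \<in> A \<Longrightarrow> b \<in> B \<Longrightarrow> f a b \<le> (M::real)"
  shows "0 \<le> hausdorff f A B"
  using excess_nonneg[OF assms] unfolding hausdorff_def by (simp add: max.coboundedI1)

lemma hausdorff_triangle:
  assumes "A \<noteq> {}" "B \<noteq> {}" "C \<noteq> {}" "\<And>a b. 0 \<le> f a b" "\<And>a b c. f a c \<le> f a b + f b c"
    and "\<And>a b. a \<in> A \<union> B \<union> C \<Longrightarrow> b \<in> A \<union> B \<union> C \<Longrightarrow> f a b \<le> (M::real)"
  shows "hausdorff f A C \<le> hausdorff f A B + hausdorff f B C"
proof -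
  have "excess f A C \<le> excess f A B + excess f B C"
    by (rule excess_triangle[OF assms(1-5)]) (use assms(6) in blast)
  moreover have "excess f C A \<le> excess f C B + excess f B A"
    by (rule excess_triangle[OF assms(3,2,1,4,5)]) (use assms(6) in blast)
  ultimately show ?thesis unfolding hausdorff_def by linarith
qed

lemma hausdorff_mono:
  assumes "A \<noteq> {}" "B \<noteq> {}" "\<And>a b. 0 \<le> f a b" "\<And>a b. f a b \<le> g a b"
    and "\<And>a b. a \<in> A \<union> B \<Longrightarrow> b \<in> A \<union> B \<Longrightarrow> g a b \<le> (M::real)"
  shows "hausdorff f A B \<le> hausdorff g A B"
  unfolding hausdorff_def
  by (intro max.mono excess_mono[of _ _ f g M]) (use assms in auto)

lemma hausdorff_commute: "hausdorff f A B = hausdorff f B A"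
  unfolding hausdorff_def by simp

lemma nonneg_LIMSEQ_0_iff_eventually_less:
  fixes x :: "nat \<Rightarrow> real"
  assumes "\<And>n. 0 \<le> x n"
  shows "x \<longlonglongrightarrow> 0 \<longleftrightarrow> (\<forall>r>0. eventually (\<lambda>n. x n < r) sequentially)"
proof
  show "x \<longlonglongrightarrow> 0 \<Longrightarrow> \<forall>r>0. eventually (\<lambda>n. x n < r) sequentially"
    using order_tendstoD(2) by blast
  show "\<forall>r>0. eventually (\<lambda>n. x n < r) sequentially \<Longrightarrow> x \<longlonglongrightarrow> 0"
    using assms by (intro order_tendstoI) (auto intro: always_eventually order.strict_trans2)
qed

subsection \<open>Hausdorff distances in a Frechet space\<close>

definition nonempty_bounded :: "(nat \<Rightarrow> 'a::real_vector \<Rightarrow> real) \<Rightarrow> 'a set \<Rightarrow> bool" where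
  "nonempty_bounded p A \<longleftrightarrow> A \<noteq> {} \<and> (\<forall>i. \<exists>M. \<forall>a\<in>A. p i a \<le> M)"

lemma cb_nonempty_bounded: "A \<in> cb p \<Longrightarrow> nonempty_bounded p A"
  unfolding cb_def nonempty_bounded_def by simp

lemma nonempty_bounded_Un:
  assumes "nonempty_bounded p A" "nonempty_bounded p B"
  shows "nonempty_bounded p (A \<union> B)"
proof -
  have "\<exists>M. \<forall>a\<in>A \<union> B. p i a \<le> M" for i
  proof -
    obtain MA MB where "\<forall>a\<in>A. p i a \<le> MA" "\<forall>a\<in>B. p i a \<le> MB"
      using assms unfolding nonempty_bounded_def by blast
    then have "\<forall>a\<in>A \<union> B. p i a \<le> max MA MB" by (auto simp: le_max_iff_disj)
    then show ?thesis by blast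
  qed
  then show ?thesis using assms unfolding nonempty_bounded_def by blast
qed

lemma nonempty_bounded_diff:
  assumes "frechet_seminorms p" "nonempty_bounded p A"
  obtains M where "\<And>a b. a \<in> A \<Longrightarrow> b \<in> A \<Longrightarrow> p i (a - b) \<le> M"
proof -
  obtain M where M: "\<forall>a\<in>A. p i a \<le> M" using assms(2) unfolding nonempty_bounded_def by blast
  have sn: "is_seminorm (p i)" by (rule frechet_seminorms_seminorm[OF assms(1)])
  have "p i (a - b) \<le> M + M" if "a \<in> A" "b \<in> A" for a b
  proof -
    have "p i (a - b) \<le> p i a + p i b"
      using seminorm_diff_triangle[OF sn, of a b 0] seminorm_minus[OF sn, of b] by simp
    moreover have "p i a \<le> M" "p i b \<le> M" using M that by auto
    ultimately show ?thesis by linarith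
  qed
  then show ?thesis using that by blast
qed

context
  fixes p :: "nat \<Rightarrow> 'a::real_vector \<Rightarrow> real"
  assumes frechet: "frechet_seminorms p"
begin

private lemma seminorm_cost_nonneg: "0 \<le> p i (a - b)"
  by (rule frechet_seminorms_nonneg[OF frechet])

lemma Hi_nonneg:
  assumes "nonempty_bounded p A" "nonempty_bounded p B"
  shows "0 \<le> Hi p i A B"
proof -
  obtain M where "\<And>a b. a \<in> A \<union> B \<Longrightarrow> b \<in> A \<union> B \<Longrightarrow> p i (a - b) \<le> M"
    using nonempty_bounded_diff[OF frechet nonempty_bounded_Un[OF assms]] by blast
  then show ?thesis
    using hausdorff_nonneg[of A B "\<lambda>a b. p i (a - b)" M] assms seminorm_cost_nonneg
    unfolding nonempty_bounded_def by blast
qed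

lemma Hi_triangle:
  assumes "nonempty_bounded p A" "nonempty_bounded p B" "nonempty_bounded p C"
  shows "Hi p i A C \<le> Hi p i A B + Hi p i B C"
proof -
  obtain M where "\<And>a b. a \<in> A \<union> B \<union> C \<Longrightarrow> b \<in> A \<union> B \<union> C \<Longrightarrow> p i (a - b) \<le> M"
    using nonempty_bounded_diff[OF frechet nonempty_bounded_Un[OF nonempty_bounded_Un[OF assms(1,2)] assms(3)]]
    by blast
  then show ?thesis
    using hausdorff_triangle[of A B C "\<lambda>a b. p i (a - b)" M] assms seminorm_cost_nonneg
      seminorm_diff_triangle[OF frechet_seminorms_seminorm[OF frechet, of i]]
    unfolding nonempty_bounded_def by blast
qed

lemma Hi_mono:
  assumes "nonempty_bounded p A" "nonempty_bounded p B" "i \<le> j"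
  shows "Hi p i A B \<le> Hi p j A B"
proof -
  obtain M where "\<And>a b. a \<in> A \<union> B \<Longrightarrow> b \<in> A \<union> B \<Longrightarrow> p j (a - b) \<le> M"
    using nonempty_bounded_diff[OF frechet nonempty_bounded_Un[OF assms(1,2)]] by blast
  then show ?thesis
    using hausdorff_mono[of A B "\<lambda>a b. p i (a - b)" "\<lambda>a b. p j (a - b)" M] assms seminorm_cost_nonneg
      frechet_seminorms_mono[OF frechet \<open>i \<le> j\<close>]
    unfolding nonempty_bounded_def by blast
qed

lemma fdist_term_nonneg: "0 \<le> (1/2::real) ^ Suc i * (p i z / (1 + p i z))"
  using frechet_seminorms_nonneg[OF frechet, of i z] by simp

lemma fdist_term_le: "(1/2::real) ^ Suc i * (p i z / (1 + p i z)) \<le> (1/2) ^ Suc i"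
  using frechet_seminorms_nonneg[OF frechet, of i z] by (intro mult_left_le) auto

lemma summable_fdist_terms: "summable (\<lambda>i. (1/2::real) ^ Suc i * (p i z / (1 + p i z)))"
  by (rule summable_comparison_test[OF _ sums_summable[OF power_half_series]])
    (auto simp only: real_norm_def abs_of_nonneg[OF fdist_term_nonneg] fdist_term_le)

lemma fdist_nonneg: "0 \<le> fdist p x y"
  unfolding fdist_def by (intro suminf_nonneg summable_fdist_terms fdist_term_nonneg)

lemma fdist_le_1: "fdist p x y \<le> 1"
proof -
  have "fdist p x y \<le> (\<Sum>i. (1/2::real) ^ Suc i)"
    unfolding fdist_def
    by (rule suminf_le[OF fdist_term_le summable_fdist_terms sums_summable[OF power_half_series]])
  then show ?thesis using sums_unique[OF power_half_series] by simp
qed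

lemma fdist_term_le_fdist: "(1/2::real) ^ Suc i * (p i (x - y) / (1 + p i (x - y))) \<le> fdist p x y"
  unfolding fdist_def
  using sum_le_suminf[OF summable_fdist_terms, of "{i}"] fdist_term_nonneg by simp

lemma seminorm_le_of_fdist_less:
  assumes "e \<le> 1/2" "fdist p x y < e * (1/2) ^ Suc i"
  shows "p i (x - y) \<le> 2 * e"
proof -
  define u where "u = p i (x - y)"
  have "u \<ge> 0" unfolding u_def by (rule frechet_seminorms_nonneg[OF frechet])
  have "(1/2) ^ Suc i * (u / (1 + u)) < (1/2) ^ Suc i * e"
    using fdist_term_le_fdist[of i x y] assms(2) unfolding u_def by (simp add: mult.commute)
  moreover have "(0::real) < (1/2) ^ Suc i" by simp
  ultimately have "u / (1 + u) < e" using mult_less_cancel_left_pos by blast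
  then have "u < e * (1 + u)" using \<open>u \<ge> 0\<close> by (simp add: field_simps)
  moreover have "e * u \<le> (1/2) * u" using assms(1) \<open>u \<ge> 0\<close> by (rule mult_right_mono)
  ultimately show ?thesis unfolding u_def by (simp add: algebra_simps)
qed

text \<open>The first \<open>N\<close> terms are bounded via \<open>p\<^sub>i \<le> p\<^sub>N\<close>, the tail by the geometric series.\<close>

lemma fdist_le_seminorm: "fdist p x y \<le> p N (x - y) + (1/2) ^ N"
proof -
  define u where "u = p N (x - y)"
  define tail where "tail i = (if N \<le> i then (1/2::real) ^ Suc i else 0)" for i
  have "(\<lambda>i. tail (i + N)) = (\<lambda>i. (1/2::real) ^ N * (1/2) ^ Suc i)"
    unfolding tail_def by (simp add: power_add mult.commute)
  then have "(\<lambda>i. tail (i + N)) sums ((1/2) ^ N * 1)"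
    using sums_mult[OF power_half_series] by metis
  then have "tail sums ((1/2) ^ N)"
    using sums_iff_shift[of tail N] unfolding tail_def by simp
  then have bound_sums: "(\<lambda>i. u * (1/2::real) ^ Suc i + tail i) sums (u * 1 + (1/2) ^ N)"
    by (intro sums_add sums_mult power_half_series)
  have "(1/2::real) ^ Suc i * (p i (x - y) / (1 + p i (x - y))) \<le> u * (1/2) ^ Suc i + tail i" for i
  proof (cases "N \<le> i")
    case True
    have "0 \<le> u * (1/2::real) ^ Suc i" unfolding u_def using frechet_seminorms_nonneg[OF frechet] by simp
    moreover have "tail i = (1/2) ^ Suc i" using True unfolding tail_def by simp
    ultimately show ?thesis using fdist_term_le[of i "x - y"] by linarith
  next
    case False
    have "p i (x - y) / (1 + p i (x - y)) \<le> p i (x - y) / 1"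
      using frechet_seminorms_nonneg[OF frechet, of i "x - y"] by (intro divide_left_mono) auto
    also have "\<dots> \<le> u" unfolding u_def using False frechet_seminorms_mono[OF frechet, of i N] by simp
    finally have "(1/2::real) ^ Suc i * (p i (x - y) / (1 + p i (x - y))) \<le> (1/2) ^ Suc i * u"
      by (intro mult_left_mono) auto
    then show ?thesis using False unfolding tail_def by (simp add: mult.commute)
  qed
  then have "fdist p x y \<le> (\<Sum>i. u * (1/2::real) ^ Suc i + tail i)"
    unfolding fdist_def by (rule suminf_le[OF _ summable_fdist_terms sums_summable[OF bound_sums]])
  then show ?thesis using sums_unique[OF bound_sums] unfolding u_def by simp
qed

lemma H_nonneg:
  assumes "nonempty_bounded p A" "nonempty_bounded p B"
  shows "0 \<le> H p A B"
  using hausdorff_nonneg[of A B "fdist p" 1] assms fdist_nonneg fdist_le_1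
  unfolding nonempty_bounded_def by blast

lemma Hi_le_of_H_less:
  assumes "nonempty_bounded p A" "nonempty_bounded p B"
    and "e \<le> 1/2" "H p A B < e * (1/2) ^ Suc i"
  shows "Hi p i A B \<le> 2 * e"
  using hausdorff_le_of_hausdorff_less[of A B "fdist p" "\<lambda>a b. p i (a - b)" 1]
    assms fdist_nonneg fdist_le_1 seminorm_cost_nonneg seminorm_le_of_fdist_less
  unfolding nonempty_bounded_def by blast

lemma H_le_of_Hi_less:
  assumes A: "nonempty_bounded p A" and B: "nonempty_bounded p B" and "Hi p N A B < d"
  shows "H p A B \<le> d + (1/2) ^ N"
proof -
  obtain M where "\<And>a b. a \<in> A \<union> B \<Longrightarrow> b \<in> A \<union> B \<Longrightarrow> p N (a - b) \<le> M"
    using nonempty_bounded_diff[OF frechet nonempty_bounded_Un[OF A B]] by blast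
  moreover have "fdist p a b \<le> d + (1/2) ^ N" if "p N (a - b) < d" for a b
    using fdist_le_seminorm[of a b N] that by linarith
  ultimately show ?thesis
    using hausdorff_le_of_hausdorff_less[of A B "\<lambda>a b. p N (a - b)" "fdist p" M d]
      assms seminorm_cost_nonneg fdist_nonneg
    unfolding nonempty_bounded_def by blast
qed

lemma H_LIMSEQ_0_iff_Hi_LIMSEQ_0:
  assumes A: "\<And>n. nonempty_bounded p (A n)" and B: "nonempty_bounded p B"
  shows "(\<lambda>n. H p (A n) B) \<longlonglongrightarrow> 0 \<longleftrightarrow> (\<forall>i. (\<lambda>n. Hi p i (A n) B) \<longlonglongrightarrow> 0)"
proof
  assume lim: "(\<lambda>n. H p (A n) B) \<longlonglongrightarrow> 0"
  show "\<forall>i. (\<lambda>n. Hi p i (A n) B) \<longlonglongrightarrow> 0"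
  proof
    fix i
    show "(\<lambda>n. Hi p i (A n) B) \<longlonglongrightarrow> 0"
      unfolding nonneg_LIMSEQ_0_iff_eventually_less[OF Hi_nonneg[OF A B]]
    proof (intro allI impI)
      fix r :: real assume "0 < r"
      define e where "e = min (1/2) (r/4)"
      have "0 < e * (1/2) ^ Suc i" using \<open>0 < r\<close> by (simp add: e_def)
      with lim have "eventually (\<lambda>n. H p (A n) B < e * (1/2) ^ Suc i) sequentially"
        by (rule order_tendstoD(2))
      then show "eventually (\<lambda>n. Hi p i (A n) B < r) sequentially"
      proof (rule eventually_mono)
        fix n assume "H p (A n) B < e * (1/2) ^ Suc i"
        then have "Hi p i (A n) B \<le> 2 * e" by (intro Hi_le_of_H_less[OF A B]) (simp_all add: e_def)
        then show "Hi p i (A n) B < r" using \<open>0 < r\<close> by (simp add: e_def)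
      qed
    qed
  qed
next
  assume lim: "\<forall>i. (\<lambda>n. Hi p i (A n) B) \<longlonglongrightarrow> 0"
  show "(\<lambda>n. H p (A n) B) \<longlonglongrightarrow> 0"
    unfolding nonneg_LIMSEQ_0_iff_eventually_less[OF H_nonneg[OF A B]]
  proof (intro allI impI)
    fix r :: real assume "0 < r"
    obtain N where N: "(1/2::real) ^ N < r/2" using real_arch_pow_inv[of "r/2" "1/2"] \<open>0 < r\<close> by auto
    have "eventually (\<lambda>n. Hi p N (A n) B < r/2) sequentially"
      using lim \<open>0 < r\<close> by (intro order_tendstoD(2)) auto
    then show "eventually (\<lambda>n. H p (A n) B < r) sequentially"
      by (rule eventually_mono) (use H_le_of_Hi_less[OF A B] N in fastforce)
  qed
qed

end

lemma simple_function_piecewise_constant: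
  fixes n :: nat
  assumes A: "\<And>j. j < n \<Longrightarrow> A j \<in> sets M"
    and on_A: "\<And>t j. t \<in> space M \<Longrightarrow> j < n \<Longrightarrow> t \<in> A j \<Longrightarrow> G t = C j"
    and off_A: "\<And>t. t \<in> space M \<Longrightarrow> t \<notin> (\<Union>j<n. A j) \<Longrightarrow> G t = c"
  shows "simple_function M G"
  unfolding simple_function_def
proof
  have "G ` space M \<subseteq> insert c (C ` {..<n})" using on_A off_A by fastforce
  then show "finite (G ` space M)" by (rule finite_subset) simp
  show "\<forall>X\<in>G ` space M. G -` {X} \<inter> space M \<in> sets M"
  proof
    fix X
    have "G -` {X} \<inter> space M = (\<Union>j\<in>{j. j < n \<and> C j = X}. A j \<inter> space M) \<union>
        (if X = c then space M - (\<Union>j<n. A j) else {})" (is "_ = ?pieces")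
    proof (intro equalityI subsetI)
      fix t assume t: "t \<in> G -` {X} \<inter> space M"
      show "t \<in> ?pieces"
      proof (cases "t \<in> (\<Union>j<n. A j)")
        case True
        then obtain j where "j < n" "t \<in> A j" by blast
        then show ?thesis using t on_A[of t j] by auto
      qed (use t off_A in auto)
    qed (use on_A off_A in \<open>auto split: if_splits\<close>)
    moreover have "(\<Union>j\<in>{j. j < n \<and> C j = X}. A j \<inter> space M) \<in> sets M"
      using A by (intro sets.finite_UN) auto
    moreover have "space M - (\<Union>j<n. A j) \<in> sets M" using A by (intro sets.Diff sets.finite_UN) auto
    ultimately show "G -` {X} \<inter> space M \<in> sets M" by auto
  qed
qed

lemma simple_mfE:
  assumes "simple_mf p G"
  obtains n :: nat and A :: "nat \<Rightarrow> real set" and C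
  where "\<And>j. j < n \<Longrightarrow> A j \<in> sets lebesgue" "\<And>j. j < n \<Longrightarrow> A j \<subseteq> {0..1}"
    "\<And>j. j < n \<Longrightarrow> C j \<in> cb p"
    "\<And>t j. t \<in> {0..1} \<Longrightarrow> j < n \<Longrightarrow> t \<in> A j \<Longrightarrow> G t = C j"
    "\<And>t. t \<in> {0..1} \<Longrightarrow> t \<notin> (\<Union>j<n. A j) \<Longrightarrow> G t = {0}"
  using assms unfolding simple_mf_def
proof (elim exE conjE)
  fix n :: nat and A :: "nat \<Rightarrow> real set" and C
  assume "\<forall>j<n. A j \<in> sets lebesgue \<and> A j \<subseteq> {0..1} \<and> C j \<in> cb p"
    and "\<forall>t\<in>{0..1}. (\<forall>j<n. t \<in> A j \<longrightarrow> G t = C j) \<and> (t \<notin> (\<Union>j<n. A j) \<longrightarrow> G t = {0})"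
  then show thesis by (intro that[of n A C]) auto
qed

lemma simple_mf_nonempty_bounded:
  assumes "frechet_seminorms p" "simple_mf p G" "t \<in> {0..1}"
  shows "nonempty_bounded p (G t)"
proof -
  obtain n :: nat and A :: "nat \<Rightarrow> real set" and C where "\<And>j. j < n \<Longrightarrow> A j \<in> sets lebesgue" "\<And>j. j < n \<Longrightarrow> A j \<subseteq> {0..1}"
    and C: "\<And>j. j < n \<Longrightarrow> C j \<in> cb p"
    and G: "\<And>t j. t \<in> {0..1} \<Longrightarrow> j < n \<Longrightarrow> t \<in> A j \<Longrightarrow> G t = C j"
      "\<And>t. t \<in> {0..1} \<Longrightarrow> t \<notin> (\<Union>j<n. A j) \<Longrightarrow> G t = {0}"
    by (fact simple_mfE[OF assms(2)])
  show ?thesis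
  proof (cases "t \<in> (\<Union>j<n. A j)")
    case True
    then obtain j where "j < n" "t \<in> A j" by blast
    then show ?thesis using C G(1)[OF assms(3)] cb_nonempty_bounded by metis
  next
    case False
    have "nonempty_bounded p {0}"
      using seminorm_zero[OF frechet_seminorms_seminorm[OF assms(1)]] unfolding nonempty_bounded_def by auto
    then show ?thesis using G(2)[OF assms(3) False] by simp
  qed
qed

lemma simple_mf_simple_function:
  assumes "simple_mf p G"
  shows "simple_function (lebesgue_on {0..1}) G"
proof -
  obtain n :: nat and A :: "nat \<Rightarrow> real set" and C where A: "\<And>j. j < n \<Longrightarrow> A j \<in> sets lebesgue" "\<And>j. j < n \<Longrightarrow> A j \<subseteq> {0..1}"
    and "\<And>j. j < n \<Longrightarrow> C j \<in> cb p"
    and G: "\<And>t j. t \<in> {0..1} \<Longrightarrow> j < n \<Longrightarrow> t \<in> A j \<Longrightarrow> G t = C j"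
      "\<And>t. t \<in> {0..1} \<Longrightarrow> t \<notin> (\<Union>j<n. A j) \<Longrightarrow> G t = {0}"
    by (fact simple_mfE[OF assms])
  show ?thesis
  proof (rule simple_function_piecewise_constant)
    show "A j \<in> sets (lebesgue_on {0..1})" if "j < n" for j
      using A[OF that] by (simp add: sets_restrict_space_iff)
  qed (use G in auto)
qed

lemma borel_measurable_Hi_simple_mf:
  assumes "simple_mf p G" "simple_mf p G'"
  shows "(\<lambda>t. Hi p i (G t) (G' t)) \<in> borel_measurable (lebesgue_on {0..1})"
  by (rule borel_measurable_simple_function[OF simple_function_compose2])
    (rule simple_mf_simple_function, fact)+

subsection \<open>A diagonal argument for almost everywhere convergence\<close>

lemma (in finite_measure) measure_not_Cauchy_LIMSEQ_0:
  fixes f :: "nat \<Rightarrow> nat \<Rightarrow> 'a \<Rightarrow> real" and g :: "nat \<Rightarrow> 'a \<Rightarrow> real"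
  assumes [measurable]: "\<And>m m'. f m m' \<in> borel_measurable M"
    and f_le: "\<And>m m' t. t \<in> space M \<Longrightarrow> f m m' t \<le> g m t + g m' t"
    and g_LIMSEQ: "AE t in M. (\<lambda>m. g m t) \<longlonglongrightarrow> 0" and "0 < c"
  shows "(\<lambda>n. measure M {t \<in> space M. \<exists>m\<ge>n. \<exists>m'\<ge>n. c < f m m' t}) \<longlonglongrightarrow> 0"
proof -
  define D where "D n = {t \<in> space M. \<exists>m\<ge>n. \<exists>m'\<ge>n. c < f m m' t}" for n
  have D_sets: "D n \<in> sets M" for n unfolding D_def by measurable
  have "decseq D" unfolding decseq_def D_def by (auto intro: order_trans)
  have "AE t in M. t \<notin> (\<Inter>n. D n)"
    using g_LIMSEQ
  proof eventually_elim
    case (elim t)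
    have "eventually (\<lambda>m. g m t < c/2) sequentially" using elim \<open>0 < c\<close> by (intro order_tendstoD(2)) auto
    then obtain N where N: "\<And>m. N \<le> m \<Longrightarrow> g m t < c/2" unfolding eventually_sequentially by blast
    have "f m m' t \<le> c" if "N \<le> m" "N \<le> m'" "t \<in> space M" for m m'
      using f_le[OF that(3), of m m'] N[OF that(1)] N[OF that(2)] by linarith
    then have "t \<notin> D N" unfolding D_def by force
    then show ?case by blast
  qed
  then have "(\<Inter>n. D n) \<in> null_sets M" using D_sets by (subst AE_iff_null_sets) auto
  then have "measure M (\<Inter>n. D n) = 0" by (simp add: measure_eq_0_null_sets)
  moreover have "(\<lambda>n. measure M (D n)) \<longlonglongrightarrow> measure M (\<Inter>n. D n)"
    using D_sets \<open>decseq D\<close> by (intro finite_Lim_measure_decseq) auto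
  ultimately show ?thesis unfolding D_def by simp
qed

lemma (in finite_measure) AE_eventually_diagonal_le:
  fixes f :: "nat \<Rightarrow> nat \<Rightarrow> nat \<Rightarrow> 'a \<Rightarrow> real" and g :: "nat \<Rightarrow> nat \<Rightarrow> 'a \<Rightarrow> real"
  assumes [measurable]: "\<And>k m m'. f k m m' \<in> borel_measurable M"
    and f_le: "\<And>k m m' t. t \<in> space M \<Longrightarrow> f k m m' t \<le> g k m t + g k m' t"
    and g_le: "\<And>k m m' t. t \<in> space M \<Longrightarrow> g k m t \<le> f k m m' t + g k m' t"
    and g_LIMSEQ: "\<And>k. AE t in M. (\<lambda>m. g k m t) \<longlonglongrightarrow> 0"
    and c: "\<And>k. 0 < c k"
  shows "\<exists>n. AE t in M. eventually (\<lambda>k. g k (n k) t \<le> c k) sequentially"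
proof -
  define D where "D k n = {t \<in> space M. \<exists>m\<ge>n. \<exists>m'\<ge>n. c k < f k m m' t}" for k n
  have D_sets: "D k n \<in> sets M" for k n unfolding D_def by measurable
  have "\<exists>n. measure M (D k n) < (1/2) ^ k" for k
  proof -
    have "(\<lambda>n. measure M (D k n)) \<longlonglongrightarrow> 0" unfolding D_def
      by (rule measure_not_Cauchy_LIMSEQ_0[where g = "g k"]) (simp_all add: f_le g_LIMSEQ c)
    then have "eventually (\<lambda>n. measure M (D k n) < (1/2) ^ k) sequentially"
      by (rule order_tendstoD(2)) simp
    then show ?thesis unfolding eventually_sequentially by blast
  qed
  then obtain n where n: "\<And>k. measure M (D k (n k)) < (1/2) ^ k" by metis
  have "summable (\<lambda>k. measure M (D k (n k)))"
    by (rule summable_comparison_test[OF _ summable_geometric[of "1/2"]]) (use n less_imp_le in auto)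
  then have "AE t in M. eventually (\<lambda>k. t \<in> space M - D k (n k)) sequentially"
    by (intro borel_cantelli_AE1 D_sets) (auto simp: less_top[symmetric])
  moreover have "AE t in M. \<forall>k. (\<lambda>m. g k m t) \<longlonglongrightarrow> 0" using g_LIMSEQ by (simp add: AE_all_countable)
  ultimately have "AE t in M. eventually (\<lambda>k. g k (n k) t \<le> c k) sequentially"
  proof eventually_elim
    case (elim t)
    show ?case using elim(1)
    proof (rule eventually_mono)
      fix k assume t: "t \<in> space M - D k (n k)"
      have "g k (n k) t - c k \<le> g k m t" if "n k \<le> m" for m
      proof -
        have "f k (n k) m t \<le> c k" using t that unfolding D_def by (auto simp: not_less)
        then show ?thesis using g_le[of t k "n k" m] t by simp
      qed
      then have "eventually (\<lambda>m. g k (n k) t - c k \<le> g k m t) sequentially"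
        unfolding eventually_sequentially by blast
      then have "g k (n k) t - c k \<le> 0"
        by (rule tendsto_lowerbound[OF elim(2)[rule_format, of k]]) simp
      then show "g k (n k) t \<le> c k" by simp
    qed
  qed
  then show ?thesis by blast
qed

lemma Hi_LIMSEQ_0_of_diagonal:
  assumes fs: "frechet_seminorms p" and A: "\<And>k. nonempty_bounded p (A k)" and B: "nonempty_bounded p B"
    and diagonal: "eventually (\<lambda>k. Hi p k (A k) B \<le> c k) sequentially" and "c \<longlonglongrightarrow> 0"
  shows "(\<lambda>k. Hi p i (A k) B) \<longlonglongrightarrow> 0"
proof (rule tendsto_sandwich[OF _ _ tendsto_const \<open>c \<longlonglongrightarrow> 0\<close>])
  show "eventually (\<lambda>k. 0 \<le> Hi p i (A k) B) sequentially" using Hi_nonneg[OF fs A B] by simp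
  show "eventually (\<lambda>k. Hi p i (A k) B \<le> c k) sequentially"
    using diagonal eventually_ge_at_top[of i]
  proof eventually_elim
    case (elim k)
    then show ?case using Hi_mono[OF fs A[of k] B \<open>i \<le> k\<close>] by linarith
  qed
qed

lemma bochner_measurable_iff_totally_measurable:
  assumes fs: "frechet_seminorms p" and \<Gamma>: "\<And>t. t \<in> {0..1} \<Longrightarrow> nonempty_bounded p (\<Gamma> t)"
  shows "bochner_measurable_mf p \<Gamma> \<longleftrightarrow> totally_measurable_mf p \<Gamma>"
proof -
  have "(AE t in lebesgue_on {0..1}. (\<lambda>n. H p (G n t) (\<Gamma> t)) \<longlonglongrightarrow> 0) \<longleftrightarrow>
      (\<forall>i. AE t in lebesgue_on {0..1}. (\<lambda>n. Hi p i (G n t) (\<Gamma> t)) \<longlonglongrightarrow> 0)"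
    if G: "\<And>n. simple_mf p (G n)" for G
  proof -
    have "(AE t in lebesgue_on {0..1}. (\<lambda>n. H p (G n t) (\<Gamma> t)) \<longlonglongrightarrow> 0) \<longleftrightarrow>
        (AE t in lebesgue_on {0..1}. \<forall>i. (\<lambda>n. Hi p i (G n t) (\<Gamma> t)) \<longlonglongrightarrow> 0)"
      using H_LIMSEQ_0_iff_Hi_LIMSEQ_0[OF fs simple_mf_nonempty_bounded[OF fs G] \<Gamma>]
      by (intro AE_cong) simp
    then show ?thesis by (simp add: AE_all_countable)
  qed
  then show ?thesis unfolding bochner_measurable_mf_def totally_measurable_mf_def by blast
qed

lemma measurable_by_seminorm_imp_totally_measurable:
  assumes fs: "frechet_seminorms p" and \<Gamma>: "\<And>t. t \<in> {0..1} \<Longrightarrow> nonempty_bounded p (\<Gamma> t)"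
    and "measurable_by_seminorm_mf p \<Gamma>"
  shows "totally_measurable_mf p \<Gamma>"
proof -
  interpret finite_measure "lebesgue_on {0..1::real}"
    by (rule finite_measure_lebesgue_on) simp
  obtain S where "\<forall>k. (\<forall>n. simple_mf p (S k n)) \<and>
      (AE t in lebesgue_on {0..1}. (\<lambda>n. Hi p k (S k n t) (\<Gamma> t)) \<longlonglongrightarrow> 0)"
    using assms(3) unfolding measurable_by_seminorm_mf_def by (rule choice[THEN exE])
  then have S: "\<And>k n. simple_mf p (S k n)"
    and S_LIMSEQ: "\<And>k. AE t in lebesgue_on {0..1}. (\<lambda>n. Hi p k (S k n t) (\<Gamma> t)) \<longlonglongrightarrow> 0"
    by auto
  have S_bdd: "nonempty_bounded p (S k n t)" if "t \<in> {0..1}" for k n t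
    by (rule simple_mf_nonempty_bounded[OF fs S that])
  have "\<exists>n. AE t in lebesgue_on {0..1}.
      eventually (\<lambda>k. Hi p k (S k (n k) t) (\<Gamma> t) \<le> inverse (real (Suc k))) sequentially"
  proof (rule AE_eventually_diagonal_le[where f = "\<lambda>k m m' t. Hi p k (S k m t) (S k m' t)"])
    show "(\<lambda>t. Hi p k (S k m t) (S k m' t)) \<in> borel_measurable (lebesgue_on {0..1})" for k m m'
      by (rule borel_measurable_Hi_simple_mf[OF S S])
    show "Hi p k (S k m t) (S k m' t) \<le> Hi p k (S k m t) (\<Gamma> t) + Hi p k (S k m' t) (\<Gamma> t)"
      if "t \<in> space (lebesgue_on {0..1})" for k m m' t
    proof -
      have t: "t \<in> {0..1}" using that by simp
      have "Hi p k (S k m t) (S k m' t) \<le> Hi p k (S k m t) (\<Gamma> t) + Hi p k (\<Gamma> t) (S k m' t)"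
        by (rule Hi_triangle[OF fs S_bdd[OF t] \<Gamma>[OF t] S_bdd[OF t]])
      then show ?thesis by (simp only: hausdorff_commute[of _ "\<Gamma> t"])
    qed
    show "Hi p k (S k m t) (\<Gamma> t) \<le> Hi p k (S k m t) (S k m' t) + Hi p k (S k m' t) (\<Gamma> t)"
      if "t \<in> space (lebesgue_on {0..1})" for k m m' t
    proof -
      have t: "t \<in> {0..1}" using that by simp
      show ?thesis using Hi_triangle[OF fs S_bdd[OF t] S_bdd[OF t] \<Gamma>[OF t]] by simp
    qed
  qed (use S_LIMSEQ in simp_all)
  then obtain n where n: "AE t in lebesgue_on {0..1}.
      eventually (\<lambda>k. Hi p k (S k (n k) t) (\<Gamma> t) \<le> inverse (real (Suc k))) sequentially"
    by blast
  have diagonal_LIMSEQ: "AE t in lebesgue_on {0..1}. (\<lambda>k. Hi p i (S k (n k) t) (\<Gamma> t)) \<longlonglongrightarrow> 0" for i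
    using n AE_space
  proof eventually_elim
    case (elim t)
    then have t: "t \<in> {0..1}" by simp
    show ?case
      by (rule Hi_LIMSEQ_0_of_diagonal[OF fs S_bdd[OF t] \<Gamma>[OF t] elim(1) LIMSEQ_inverse_real_of_nat])
  qed
  show ?thesis unfolding totally_measurable_mf_def
    by (intro exI[of _ "\<lambda>k. S k (n k)"] conjI allI S diagonal_LIMSEQ)
qed

theorem theorem3p5:
  fixes p :: "nat \<Rightarrow> 'a::real_vector \<Rightarrow> real" and \<Gamma> :: "real \<Rightarrow> 'a set"
  assumes "frechet_seminorms p"
    and "\<forall>t\<in>{0..1}. \<Gamma> t \<in> cb p"
  shows "(bochner_measurable_mf p \<Gamma> \<longleftrightarrow> totally_measurable_mf p \<Gamma>) \<and>
         (totally_measurable_mf p \<Gamma> \<longleftrightarrow> measurable_by_seminorm_mf p \<Gamma>)"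
proof -
  have \<Gamma>: "nonempty_bounded p (\<Gamma> t)" if "t \<in> {0..1}" for t
    using assms(2) that by (simp add: cb_nonempty_bounded)
  have "totally_measurable_mf p \<Gamma> \<Longrightarrow> measurable_by_seminorm_mf p \<Gamma>"
    unfolding totally_measurable_mf_def measurable_by_seminorm_mf_def by blast
  then show ?thesis
    using bochner_measurable_iff_totally_measurable[of p \<Gamma>, OF assms(1) \<Gamma>]
      measurable_by_seminorm_imp_totally_measurable[of p \<Gamma>, OF assms(1) \<Gamma>] by blast
qed

end
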